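(* Let $g$ be a probability density on $\mathbb{R}$ which is unimodal, symmetric about $0$, logconcave and positive on $\mathbb{R}$, and let $h=-\ln g$. If $h'$ is unbounded (i.e. $h'(x)\to\infty$ as $x\to\infty$), then for every $y>0$, $\lim_{x\to-\infty}\frac{\bar G(y-x)}{\bar G(-x)}=0$, and consequently the upper endpoint $u(x)$ of the HPD credible interval satisfies $u(x)\to0$ as $x\to-\infty$ (i.e. $a=0$).
   Context: $G$ is the cdf of $g$, $\bar G=1-G$, $G^{-1}$ its quantile function. For $X$ with density $g(x-\theta)$, $\theta\ge0$, and $\alpha\in(0,1)$, with $d_0=G^{-1}(\tfrac1{1+\alpha})$, the $100(1-\alpha)\%$ HPD Bayesian credible interval under the prior $1_{[0,\infty)}(\theta)$ has upper endpoint $u(x)=x-G^{-1}(\alpha G(x))$ for $x\le d_0$ and $u(x)=x+G^{-1}(\tfrac12+\tfrac{1-\alpha}2G(x))$ for $x>d_0$; $a=\lim_{x\to-\infty}u(x)$. The posterior of $\theta$ given $x$ has density $g(\theta-x)1_{[0,\infty)}(\theta)/G(x)$, so $P(\theta\ge y\mid x)=\bar G(y-x)/\bar G(-x)$ for $y\ge0$. *)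

theory Defs
  imports "HOL-Analysis.Analysis"
begin

definition cdf_of :: "(real \<Rightarrow> real) \<Rightarrow> real \<Rightarrow> real" where
  "cdf_of g x = (LBINT t:{..x}. g t)"

definition surv_of :: "(real \<Rightarrow> real) \<Rightarrow> real \<Rightarrow> real" where
  "surv_of g x = 1 - cdf_of g x"

definition quantile_of :: "(real \<Rightarrow> real) \<Rightarrow> real \<Rightarrow> real" where
  "quantile_of g p = Inf {x. cdf_of g x \<ge> p}"

text \<open>Upper endpoint of the 100(1-alpha)% HPD credible interval under the prior
  indicator of [0,\<infinity>).\<close>
definition hpd_upper :: "(real \<Rightarrow> real) \<Rightarrow> real \<Rightarrow> real \<Rightarrow> real" where
  "hpd_upper g \<alpha> x =
     (let G = cdf_of g; Ginv = quantile_of g; d0 = Ginv (1 / (1 + \<alpha>)) in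
      if x \<le> d0 then x - Ginv (\<alpha> * G x)
      else x + Ginv (1/2 + (1 - \<alpha>) / 2 * G x))"

end

theory Submission
  imports Defs
begin

(* If the right
   derivative h' exceeds M beyond some point, then g(s + y) <= exp(-M y) g(s)
   there, and integrating gives the tail estimate Gbar(t + y) <= exp(-M y) Gbar(t).
   Since h' is unbounded, M can be taken arbitrarily large, so the tail ratio
   Gbar(t + y) / Gbar(t) tends to 0 as t -> oo; mirroring t = -x gives the first
   claim.  For the second claim, symmetry turns the tail ratio into
   G(x - y) / G(x), which eventually drops below alpha; then the quantile
   G^{-1}(alpha G(x)) lies in [x - y, x], i.e. 0 <= u(x) <= y for all very
   negative x. *)

section \<open>Integrals of positive densities on the real line\<close>

lemma set_integral_pos:
  fixes g :: "real \<Rightarrow> real"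
  assumes g: "integrable lborel g" and pos: "\<And>x. g x > 0"
    and A: "A \<in> sets borel" and not_null: "A \<notin> null_sets lborel"
  shows "(LBINT t:A. g t) > 0"
proof -
  have "0 \<le> (LBINT t:A. g t)"
    unfolding set_lebesgue_integral_def using pos
    by (intro Bochner_Integration.integral_nonneg) (auto simp: indicator_def less_imp_le)
  moreover have "0 \<noteq> (LBINT t:A. g t)"
  proof
    assume "0 = (LBINT t:A. g t)"
    then have "A \<in> null_sets lborel"
      using A pos by (intro null_if_pos_func_has_zero_int[OF g]) simp_all
    with not_null show False by contradiction
  qed
  ultimately show ?thesis by (rule order_le_neq_trans)
qed

lemma interval_subset_not_null:
  fixes a b :: real
  assumes "a < b" and "{a<..<b} \<subseteq> A"
  shows "A \<notin> null_sets lborel"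
proof
  assume null: "A \<in> null_sets lborel"
  have "emeasure lborel {a<..<b} \<le> emeasure lborel A"
    using assms(2) null by (intro emeasure_mono) auto
  also have "\<dots> = 0" using null by (rule null_setsD1)
  finally have "emeasure lborel {a<..<b} = 0" by simp
  then show False using assms(1) by simp
qed

lemma surv_of_eq_tail:
  fixes g :: "real \<Rightarrow> real"
  assumes g: "integrable lborel g" and total: "(LBINT t. g t) = 1"
  shows "surv_of g x = (LBINT t:{x<..}. g t)"
proof -
  have "(LBINT t:{..x} \<union> {x<..}. g t) = (LBINT t:{..x}. g t) + (LBINT t:{x<..}. g t)"
    using integrable_mult_indicator[OF _ g, of "{..x}"] integrable_mult_indicator[OF _ g, of "{x<..}"]
    by (intro set_integral_Un) (auto simp: set_integrable_def)
  moreover have "{..x} \<union> {x<..} = UNIV" by auto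
  ultimately show ?thesis
    using total by (simp add: surv_of_def cdf_of_def set_lebesgue_integral_def)
qed

text \<open>For a density symmetric about 0, \<open>G(x) = Gbar(-x)\<close>; this converts the
  cdf in the HPD endpoint into the tail appearing in the posterior.\<close>

lemma cdf_of_symmetric:
  fixes g :: "real \<Rightarrow> real"
  assumes g: "integrable lborel g" and total: "(LBINT t. g t) = 1"
    and symm: "\<And>x. g (- x) = g x"
  shows "cdf_of g x = surv_of g (- x)"
proof -
  have "cdf_of g x = (LBINT t:{-x..}. g t)"
  proof -
    have "{t. - t \<le> x} = {-x..}" by auto
    then show ?thesis unfolding cdf_of_def by (subst set_integral_reflect) (simp add: symm)
  qed
  also have "\<dots> = (LBINT t:{-x<..}. g t)"
    using borel_measurable_integrable[OF g]
    by (intro set_integral_cong_set)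
      (auto intro!: eventually_mono[OF AE_lborel_singleton[of "-x"]] simp: set_borel_measurable_def)
  finally show ?thesis using surv_of_eq_tail[OF g total] by simp
qed

lemma cdf_of_mono:
  fixes g :: "real \<Rightarrow> real"
  assumes g: "integrable lborel g" and nonneg: "\<And>x. g x \<ge> 0"
  shows "mono (cdf_of g)"
proof (rule monoI)
  fix a b :: real assume "a \<le> b"
  then show "cdf_of g a \<le> cdf_of g b"
    unfolding cdf_of_def set_lebesgue_integral_def
    using integrable_mult_indicator[OF _ g, of "{..a}"] integrable_mult_indicator[OF _ g, of "{..b}"] nonneg
    by (intro integral_mono) (auto simp: indicator_def)
qed

lemma cdf_of_pos:
  fixes g :: "real \<Rightarrow> real"
  assumes g: "integrable lborel g" and pos: "\<And>x. g x > 0"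
  shows "cdf_of g x > 0"
  unfolding cdf_of_def
  by (intro set_integral_pos[OF g pos] interval_subset_not_null[of "x - 1" x]) auto

lemma surv_of_pos:
  fixes g :: "real \<Rightarrow> real"
  assumes g: "integrable lborel g" and total: "(LBINT t. g t) = 1" and pos: "\<And>x. g x > 0"
  shows "surv_of g x > 0"
  unfolding surv_of_eq_tail[OF g total]
  by (intro set_integral_pos[OF g pos] interval_subset_not_null[of x "x + 1"]) auto

section \<open>Tail decay of log-concave densities\<close>

lemma convex_on_right_tangent:
  fixes f :: "real \<Rightarrow> real"
  assumes cvx: "convex_on UNIV f" and der: "(f has_real_derivative D) (at c within {c..})"
    and xc: "c < x"
  shows "D * (x - c) \<le> f x - f c"
proof -
  have "((\<lambda>y. (f y - f c) / (y - c)) \<longlongrightarrow> D) (at c within {c..})"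
    using der unfolding has_field_derivative_iff by simp
  then have slope_lim: "((\<lambda>y. (f y - f c) / (y - c)) \<longlongrightarrow> D) (at_right c)"
    by (rule tendsto_mono[rotated]) (auto intro: at_le)
  text \<open>By convexity, the chord slopes from \<open>c\<close> increase with the right endpoint.\<close>
  have "eventually (\<lambda>y. (f y - f c) / (y - c) \<le> (f x - f c) / (x - c)) (at_right c)"
    using eventually_at_right_real[OF xc]
  proof eventually_elim
    fix y assume y: "y \<in> {c<..<x}"
    have "f y \<le> (f x - f c) / (x - c) * (y - c) + f c"
      using y by (intro convex_onD_Icc' convex_on_subset[OF cvx]) auto
    then show "(f y - f c) / (y - c) \<le> (f x - f c) / (x - c)"
      using y by (simp add: field_split_simps)
  qed
  then have "D \<le> (f x - f c) / (x - c)"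
    using slope_lim by (intro tendsto_upperbound) auto
  then show ?thesis using xc by (simp add: field_simps)
qed

lemma logconcave_density_shift_le:
  fixes g h h' :: "real \<Rightarrow> real"
  assumes pos: "\<And>x. g x > 0"
    and h_def: "\<And>x. h x = - ln (g x)"
    and logconcave: "convex_on UNIV h"
    and h'_deriv: "(h has_real_derivative h' s) (at s within {s..})"
    and M: "M \<le> h' s" and y: "y > 0"
  shows "g (s + y) \<le> exp (- M * y) * g s"
proof -
  have "h' s * y \<le> h (s + y) - h s"
    using convex_on_right_tangent[OF logconcave h'_deriv, of "s + y"] y by simp
  moreover have "M * y \<le> h' s * y" using M y by (intro mult_right_mono) auto
  ultimately have "- h (s + y) \<le> - M * y + - h s" by linarith
  then have "exp (- h (s + y)) \<le> exp (- M * y) * exp (- h s)" by (simp add: mult_exp_exp)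
  moreover have "exp (- h z) = g z" for z using h_def pos by simp
  ultimately show ?thesis by simp
qed

lemma logconcave_tail_decay:
  fixes g h h' :: "real \<Rightarrow> real"
  assumes g: "integrable lborel g" and total: "(LBINT t. g t) = 1"
    and pos: "\<And>x. g x > 0"
    and h_def: "\<And>x. h x = - ln (g x)"
    and logconcave: "convex_on UNIV h"
    and h'_deriv: "\<And>x. (h has_real_derivative h' x) (at x within {x..})"
    and M: "\<And>s. s \<ge> t \<Longrightarrow> M \<le> h' s" and y: "y > 0"
  shows "surv_of g (t + y) \<le> exp (- M * y) * surv_of g t"
proof -
  have g_shift: "integrable lborel (\<lambda>s. g (s + y))"
    using lborel_integrable_real_affine[OF g, of 1 y] by (simp add: add.commute)
  have "surv_of g (t + y) = (LBINT s:{t<..}. g (s + y))"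
    unfolding surv_of_eq_tail[OF g total] set_lebesgue_integral_def
    by (subst lborel_integral_real_affine[where c=1 and t=y]) (auto simp: indicator_def add.commute)
  also have "\<dots> \<le> (LBINT s:{t<..}. exp (- M * y) * g s)"
  proof (rule set_integral_mono)
    show "set_integrable lborel {t<..} (\<lambda>s. g (s + y))"
      unfolding set_integrable_def by (rule integrable_mult_indicator[OF _ g_shift]) auto
    show "set_integrable lborel {t<..} (\<lambda>s. exp (- M * y) * g s)"
      unfolding set_integrable_def using integrable_mult_indicator[OF _ g, of "{t<..}"]
      by (intro set_integrable_mult_right[unfolded set_integrable_def]) auto
    fix s assume "s \<in> {t<..}"
    then show "g (s + y) \<le> exp (- M * y) * g s"
      by (intro logconcave_density_shift_le[OF pos h_def logconcave h'_deriv _ y] M) simp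
  qed
  also have "\<dots> = exp (- M * y) * surv_of g t"
    by (simp add: surv_of_eq_tail[OF g total])
  finally show ?thesis .
qed

text \<open>If \<open>h'\<close> is unbounded, the tail ratio \<open>Gbar(t + y) / Gbar(t)\<close> vanishes as
  \<open>t \<rightarrow> \<infinity>\<close>: for every \<open>M\<close> it is eventually at most \<open>exp (-M y)\<close>.\<close>

lemma logconcave_tail_ratio_tendsto_zero:
  fixes g h h' :: "real \<Rightarrow> real"
  assumes g: "integrable lborel g" and total: "(LBINT t. g t) = 1"
    and pos: "\<And>x. g x > 0"
    and h_def: "\<And>x. h x = - ln (g x)"
    and logconcave: "convex_on UNIV h"
    and h'_deriv: "\<And>x. (h has_real_derivative h' x) (at x within {x..})"
    and h'_unbounded: "filterlim h' at_top at_top"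
    and y: "y > 0"
  shows "((\<lambda>t. surv_of g (t + y) / surv_of g t) \<longlongrightarrow> 0) at_top"
proof (rule tendstoI)
  fix e :: real assume e: "e > 0"
  define M where "M = (\<bar>ln e\<bar> + 1) / y"
  have "- M * y = - (\<bar>ln e\<bar> + 1)" unfolding M_def using y by simp
  then have "exp (- M * y) < exp (ln e)" by simp
  then have M_small: "exp (- M * y) < e" using e by simp
  obtain t0 where t0: "\<And>s. s \<ge> t0 \<Longrightarrow> M \<le> h' s"
    using h'_unbounded by (auto simp: filterlim_at_top eventually_at_top_linorder)
  note surv_pos = surv_of_pos[OF g total pos]
  have "dist (surv_of g (t + y) / surv_of g t) 0 < e" if t: "t \<ge> t0" for t
  proof -
    have "M \<le> h' s" if "s \<ge> t" for s using t0 t that by simp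
    then have "surv_of g (t + y) \<le> exp (- M * y) * surv_of g t"
      by (rule logconcave_tail_decay[OF g total pos h_def logconcave h'_deriv _ y])
    then have "surv_of g (t + y) / surv_of g t \<le> exp (- M * y)"
      using surv_pos[of t] by (simp add: divide_le_eq)
    then show ?thesis using surv_pos[of t] surv_pos[of "t + y"] M_small by simp
  qed
  then show "eventually (\<lambda>t. dist (surv_of g (t + y) / surv_of g t) 0 < e) at_top"
    by (auto simp: eventually_at_top_linorder)
qed

section \<open>Quantiles and the HPD upper endpoint\<close>

lemma quantile_of_between:
  fixes g :: "real \<Rightarrow> real"
  assumes mono: "mono (cdf_of g)"
    and below: "cdf_of g (x - y) < p" and above: "p \<le> cdf_of g x"
  shows "x - y \<le> quantile_of g p" and "quantile_of g p \<le> x"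
proof -
  define S where "S = {z. cdf_of g z \<ge> p}"
  have lower: "x - y \<le> z" if "z \<in> S" for z
  proof (rule ccontr)
    assume "\<not> x - y \<le> z"
    then have "cdf_of g z \<le> cdf_of g (x - y)" using mono by (simp add: monoD)
    then show False using that below unfolding S_def by simp
  qed
  have x: "x \<in> S" unfolding S_def using above by simp
  have "bdd_below S" using lower by (auto simp: bdd_below_def)
  then show "quantile_of g p \<le> x"
    unfolding quantile_of_def S_def[symmetric] using x by (rule cInf_lower[rotated])
  show "x - y \<le> quantile_of g p"
    unfolding quantile_of_def S_def[symmetric] using x lower by (intro cInf_greatest) auto
qed

text \<open>For a symmetric positive density whose mirrored tail ratio
  \<open>Gbar(y - x) / Gbar(-x)\<close> vanishes as \<open>x \<rightarrow> -\<infinity>\<close>, the HPD upper endpoint tends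
  to 0: eventually \<open>G(x - y) < \<alpha> G(x)\<close>, so \<open>0 \<le> u(x) \<le> y\<close>.\<close>

lemma hpd_upper_tendsto_zero:
  fixes g :: "real \<Rightarrow> real" and \<alpha> :: real
  assumes g: "integrable lborel g" and total: "(LBINT t. g t) = 1"
    and pos: "\<And>x. g x > 0" and symm: "\<And>x. g (- x) = g x"
    and ratio: "\<And>y. y > 0 \<Longrightarrow> ((\<lambda>x. surv_of g (y - x) / surv_of g (- x)) \<longlongrightarrow> 0) at_bot"
    and \<alpha>: "0 < \<alpha>" "\<alpha> \<le> 1"
  shows "(hpd_upper g \<alpha> \<longlongrightarrow> 0) at_bot"
proof (rule tendstoI)
  fix e :: real assume e: "e > 0"
  define y where "y = e / 2"
  have y: "y > 0" using e by (simp add: y_def)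
  define d0 where "d0 = quantile_of g (1 / (1 + \<alpha>))"
  have mirror: "cdf_of g z = surv_of g (- z)" for z
    using cdf_of_symmetric[OF g total symm] by simp
  have "eventually (\<lambda>x. surv_of g (y - x) / surv_of g (- x) < \<alpha>) at_bot"
    using order_tendstoD(2)[OF ratio[OF y] \<alpha>(1)] .
  moreover have "eventually (\<lambda>x. x \<le> d0) at_bot" by (rule eventually_le_at_bot)
  ultimately show "eventually (\<lambda>x. dist (hpd_upper g \<alpha> x) 0 < e) at_bot"
  proof eventually_elim
    case (elim x)
    have u: "hpd_upper g \<alpha> x = x - quantile_of g (\<alpha> * cdf_of g x)"
      using elim(2) unfolding hpd_upper_def d0_def Let_def by simp
    have G_pos: "cdf_of g x > 0" by (rule cdf_of_pos[OF g pos])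
    have "cdf_of g (x - y) < \<alpha> * cdf_of g x"
      using elim(1) G_pos unfolding mirror by (simp add: divide_less_eq algebra_simps)
    moreover have "\<alpha> * cdf_of g x \<le> cdf_of g x" using G_pos \<alpha> by simp
    moreover have "mono (cdf_of g)" using pos by (intro cdf_of_mono[OF g] less_imp_le)
    ultimately have "x - y \<le> quantile_of g (\<alpha> * cdf_of g x)" "quantile_of g (\<alpha> * cdf_of g x) \<le> x"
      using quantile_of_between by blast+
    then show ?case using y unfolding u y_def by (simp add: dist_real_def)
  qed
qed

theorem mainTheorem15:
  fixes g h h' :: "real \<Rightarrow> real" and \<alpha> :: real
  assumes meas: "g \<in> borel_measurable lborel"
    and integrable: "integrable lborel g"
    and total: "(LBINT t. g t) = 1"
    and pos: "\<And>x. g x > 0"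
    and symm: "\<And>x. g (- x) = g x"
    and unimodal_inc: "mono_on {..0} g"
    and unimodal_dec: "antimono_on {0..} g"
    and h_def: "\<And>x. h x = - ln (g x)"
    and logconcave: "convex_on UNIV h"
    and h'_deriv: "\<And>x. (h has_real_derivative h' x) (at x within {x..})"
    and h'_unbounded: "filterlim h' at_top at_top"
    and \<alpha>: "0 < \<alpha>" "\<alpha> < 1"
  shows "(\<forall>y>0. ((\<lambda>x. surv_of g (y - x) / surv_of g (- x)) \<longlongrightarrow> 0) at_bot)
         \<and> (hpd_upper g \<alpha> \<longlongrightarrow> 0) at_bot"
proof -
  have ratio: "((\<lambda>x. surv_of g (y - x) / surv_of g (- x)) \<longlongrightarrow> 0) at_bot" if "y > 0" for y
  proof -
    have "((\<lambda>t. surv_of g (t + y) / surv_of g t) \<longlongrightarrow> 0) at_top"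
      by (rule logconcave_tail_ratio_tendsto_zero[OF integrable total pos h_def logconcave
            h'_deriv h'_unbounded \<open>y > 0\<close>])
    then have "((\<lambda>x. surv_of g (- x + y) / surv_of g (- x)) \<longlongrightarrow> 0) at_bot"
      unfolding filterlim_at_top_mirror .
    then show ?thesis by simp
  qed
  moreover have "(hpd_upper g \<alpha> \<longlongrightarrow> 0) at_bot"
    using hpd_upper_tendsto_zero[OF integrable total pos symm ratio] \<alpha> by simp
  ultimately show ?thesis by blast
qed

end
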